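(* Let $\mathbb{A}$ be a finite-dimensional Novikov algebra over $\mathbb{C}$, and let $g_0,g_1$ be symmetric bilinear forms on $\mathbb{A}$ satisfying $g(a\cdot b,c)=g(a,c\cdot b)$, let $f_0,f_1$ be skew-symmetric bilinear forms on $\mathbb{A}$ satisfying $f(a\cdot b,c)=f(a,c\cdot b)$ and $f(a\cdot b,c)+f(b\cdot c,a)+f(c\cdot a,b)=0$, and let $h_0,h_1$ be symmetric bilinear forms on $\mathbb{A}$ for which $h(a\cdot b,c)$ is totally symmetric in $a,b,c$ (for all $a,b,c\in\mathbb{A}$). Consider the compatible Poisson operators on $\mathscr{L}_\mathbb{A}^*$ $$\mathcal{P}_1\gamma=(R^*_\gamma u)_x+L^*_{\gamma_x}u+\tilde g_1\gamma_x+\tilde f_1\gamma_{xx}+\tilde h_1\gamma_{xxx},\qquad \mathcal{P}_0\gamma=\tilde g_0\gamma_x+\tilde f_0\gamma_{xx}+\tilde h_0\gamma_{xxx},$$ ($u\in\mathscr{L}^*_\mathbb{A}$, $\gamma\in\mathscr{L}_\mathbb{A}$), and the operator $\Lambda\gamma=\tilde g_0\gamma+\tilde f_0\gamma_x+\tilde h_0\gamma_{xx}$, assumed invertible (e.g. $g_0$ nondegenerate), so that $\mathcal{P}_0\gamma=\Lambda\gamma_x$. Fix a constant $c\in\mathbb{A}$ and put $v:=\Lambda^{-1}u\in\mathscr{L}_\mathbb{A}$. Define functionals $\mathcal{H}_i[v]=\int_{\mathbb{S}^1}H_i\,dx$ ($i=0,1,2$) with densities $$H_0=g_0(c,v),\qquad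 H_1=\tfrac12 g_0(v,v\cdot c)+\tfrac12 f_0(v_x,v\cdot c)+\tfrac12 h_0(v_{xx},v\cdot c),$$ $$H_2=\tfrac13 g_0(v,v\cdot(v\cdot c))+\tfrac13 f_0(v_x,v\cdot(v\cdot c))+\tfrac13 h_0(v\cdot c,v\cdot v_{xx})+\tfrac16 g_0(v\cdot c,v\cdot v)+\tfrac16 h_0(v_x\cdot c,v_x\cdot v)+\tfrac12 g_1(v,v\cdot c)+\tfrac12 f_1(v_x,v\cdot c)+\tfrac12 h_1(v_{xx},v\cdot c),$$ regarded as functionals of $u=\Lambda v$. Then $\delta_u\mathcal{H}_0=c$ (so $\mathcal{P}_0\delta_u\mathcal{H}_0=0$), and the bi-Hamiltonian chain $u_{t_1}=\mathcal{P}_1\delta_u\mathcal{H}_0=\mathcal{P}_0\delta_u\mathcal{H}_1$, $u_{t_2}=\mathcal{P}_1\delta_u\mathcal{H}_1=\mathcal{P}_0\delta_u\mathcal{H}_2$ holds. In terms of $v$, these first two flows are $$v_{t_1}=v_x\cdot c,$$ $$\tilde g_0(v_{t_2})+\tilde f_0(v_{xt_2})+\tilde h_0(v_{xxt_2})=\tilde g_0(v_x\cdot(v\cdot c))+\tilde g_0(v\cdot(v_x\cdot c))+L^*_{v\cdot c}\tilde g_0(v_x)+\tilde f_0(v_x\cdot(v_x\cdot c))+\tilde f_0(v_{xx}\cdot(v\cdot c))+2\tilde h_0((v_x\cdot c)\cdot v_{xx})+\tilde h_0((v\cdot c)\cdot v_{xxx})+\tilde g_1(v_x\cdot c)+\tilde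 f_1(v_{xx}\cdot c)+\tilde h_1(v_{xxx}\cdot c).$$
   Context: A Novikov algebra is a complex vector space $\mathbb{A}$ with a bilinear product $\cdot$ satisfying $(a\cdot b)\cdot c=(a\cdot c)\cdot b$ and $(a\cdot b)\cdot c-a\cdot(b\cdot c)=(b\cdot a)\cdot c-b\cdot(a\cdot c)$. Write $L_ab=R_ba=a\cdot b$; $(\,,\,):\mathbb{A}^*\times\mathbb{A}\to\mathbb{C}$ is the canonical pairing, and $L_a^*,R_b^*:\mathbb{A}^*\to\mathbb{A}^*$ are defined by $(L_a^*u,b)=(R_b^*u,a)=(u,a\cdot b)$. For a bilinear form $g$ on $\mathbb{A}$, $\tilde g:\mathbb{A}\to\mathbb{A}^*$ is defined by $g(a,b)=(\tilde g(a),b)$. $\mathscr{L}_\mathbb{A}$ is the space of smooth $\mathbb{A}$-valued functions of $x\in\mathbb{S}^1$ (a Lie algebra with bracket $[a,b]=a_x\cdot b-b_x\cdot a$), $\mathscr{L}^*_\mathbb{A}$ the space of smooth $\mathbb{A}^*$-valued functions on $\mathbb{S}^1$, with pairing $\langle u,a\rangle=\int_{\mathbb{S}^1}(u,a)\,dx$; all products, $L^*,R^*$ and tilde maps act pointwise in $x$, subscripts $x$ denote $x$-derivatives. For a functional $\mathcal{H}$ on $\mathscr{L}^*_\mathbb{A}$ of the form $\int_{\mathbb{S}^1}H(u,u_x,\dots)dx$, the variational derivative $\delta_u\mathcal{H}\in\mathscr{L}_\mathbb{A}$ is defined by $\langle w,\delta_u\mathcal{H}\rangle=\frac{d}{d\varepsilon}\mathcal{H}[u+\varepsilon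 w]|_{\varepsilon=0}$. $\Lambda$ is inverted as a (pseudo-)differential operator. *)

theory Defs
  imports "HOL-Analysis.Analysis"
begin

text \<open>The finite-dimensional complex vector space A is modelled as complex^'n
  (any finite index type 'n); its dual A* is also modelled as complex^'n via
  the canonical (non-conjugated) pairing below.\<close>

type_synonym 'n vecC = "complex ^ 'n"

definition pair :: "'n::finite vecC \<Rightarrow> 'n vecC \<Rightarrow> complex" where
  "pair u a = (\<Sum>i\<in>UNIV. u $ i * a $ i)"

definition cbilin_form :: "('n::finite vecC \<Rightarrow> 'n vecC \<Rightarrow> complex) \<Rightarrow> bool" where
  "cbilin_form g \<longleftrightarrow>
     (\<forall>a a' b. g (a + a') b = g a b + g a' b) \<and>
     (\<forall>a b b'. g a (b + b') = g a b + g a b') \<and>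
     (\<forall>k a b. g (k *s a) b = k * g a b) \<and>
     (\<forall>k a b. g a (k *s b) = k * g a b)"

definition cbilin_prod :: "('n::finite vecC \<Rightarrow> 'n vecC \<Rightarrow> 'n vecC) \<Rightarrow> bool" where
  "cbilin_prod m \<longleftrightarrow>
     (\<forall>a a' b. m (a + a') b = m a b + m a' b) \<and>
     (\<forall>a b b'. m a (b + b') = m a b + m a b') \<and>
     (\<forall>k a b. m (k *s a) b = k *s m a b) \<and>
     (\<forall>k a b. m a (k *s b) = k *s m a b)"

definition novikov :: "('n::finite vecC \<Rightarrow> 'n vecC \<Rightarrow> 'n vecC) \<Rightarrow> bool" where
  "novikov m \<longleftrightarrow> cbilin_prod m \<and>
     (\<forall>a b c. m (m a b) c = m (m a c) b) \<and>
     (\<forall>a b c. m (m a b) c - m a (m b c) = m (m b a) c - m b (m a c))"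

definition tl :: "('n::finite vecC \<Rightarrow> 'n vecC \<Rightarrow> complex) \<Rightarrow> 'n vecC \<Rightarrow> 'n vecC" where
  "tl g a = (\<chi> i. g a (axis i 1))"

definition Lst :: "('n::finite vecC \<Rightarrow> 'n vecC \<Rightarrow> 'n vecC) \<Rightarrow> 'n vecC \<Rightarrow> 'n vecC \<Rightarrow> 'n vecC" where
  "Lst m a u = (\<chi> i. pair u (m a (axis i 1)))"

definition Rst :: "('n::finite vecC \<Rightarrow> 'n vecC \<Rightarrow> 'n vecC) \<Rightarrow> 'n vecC \<Rightarrow> 'n vecC \<Rightarrow> 'n vecC" where
  "Rst m b u = (\<chi> i. pair u (m (axis i 1) b))"

text \<open>Loops: smooth 1-periodic functions on R (S^1 = R/Z).\<close>
definition D :: "(real \<Rightarrow> 'n::finite vecC) \<Rightarrow> real \<Rightarrow> 'n vecC" where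
  "D f = (\<lambda>x. vector_derivative f (at x))"

definition loops :: "(real \<Rightarrow> 'n::finite vecC) set" where
  "loops = {f. (\<forall>x. f (x + 1) = f x) \<and> (\<forall>k x. (D ^^ k) f differentiable (at x))}"

definition Lam :: "('n::finite vecC \<Rightarrow> 'n vecC \<Rightarrow> complex) \<Rightarrow> ('n vecC \<Rightarrow> 'n vecC \<Rightarrow> complex)
    \<Rightarrow> ('n vecC \<Rightarrow> 'n vecC \<Rightarrow> complex) \<Rightarrow> (real \<Rightarrow> 'n vecC) \<Rightarrow> real \<Rightarrow> 'n vecC" where
  "Lam g f h \<gamma> = (\<lambda>x. tl g (\<gamma> x) + tl f (D \<gamma> x) + tl h (D (D \<gamma>) x))"

definition Lam_inv where
  "Lam_inv g f h = inv_into loops (Lam g f h)"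

definition P0 :: "('n::finite vecC \<Rightarrow> 'n vecC \<Rightarrow> complex) \<Rightarrow> ('n vecC \<Rightarrow> 'n vecC \<Rightarrow> complex)
    \<Rightarrow> ('n vecC \<Rightarrow> 'n vecC \<Rightarrow> complex) \<Rightarrow> (real \<Rightarrow> 'n vecC) \<Rightarrow> real \<Rightarrow> 'n vecC" where
  "P0 g f h \<gamma> = (\<lambda>x. tl g (D \<gamma> x) + tl f (D (D \<gamma>) x) + tl h (D (D (D \<gamma>)) x))"

definition P1 :: "('n::finite vecC \<Rightarrow> 'n vecC \<Rightarrow> 'n vecC) \<Rightarrow>
    ('n vecC \<Rightarrow> 'n vecC \<Rightarrow> complex) \<Rightarrow> ('n vecC \<Rightarrow> 'n vecC \<Rightarrow> complex)
    \<Rightarrow> ('n vecC \<Rightarrow> 'n vecC \<Rightarrow> complex) \<Rightarrow> (real \<Rightarrow> 'n vecC) \<Rightarrow> (real \<Rightarrow> 'n vecC) \<Rightarrow> real \<Rightarrow> 'n vecC" where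
  "P1 m g f h u \<gamma> = (\<lambda>x. D (\<lambda>y. Rst m (\<gamma> y) (u y)) x + Lst m (D \<gamma> x) (u x)
       + tl g (D \<gamma> x) + tl f (D (D \<gamma>) x) + tl h (D (D (D \<gamma>)) x))"

definition has_var_deriv :: "((real \<Rightarrow> 'n::finite vecC) \<Rightarrow> complex) \<Rightarrow> (real \<Rightarrow> 'n vecC)
    \<Rightarrow> (real \<Rightarrow> 'n vecC) \<Rightarrow> bool" where
  "has_var_deriv F u \<gamma> \<longleftrightarrow> \<gamma> \<in> loops \<and>
     (\<forall>w\<in>loops. ((\<lambda>\<epsilon>::complex. F (\<lambda>x. u x + \<epsilon> *s w x))
        has_field_derivative (integral {0..1} (\<lambda>x. pair (w x) (\<gamma> x)))) (at 0))"

definition functional_v where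
  "functional_v g f h dens u =
     (let v = Lam_inv g f h u in integral {0..1} (\<lambda>x. dens (v x) (D v x) (D (D v) x)))"

end

theory Submission
  imports Defs
begin

text \<open>Write u = \<open>\<Lambda>\<close>v. As g0 is symmetric, f0 skew and h0 symmetric, \<open>\<Lambda>\<close> is formally
  self-adjoint, so a variational derivative with respect to u is \<open>\<Lambda>\<^sup>-\<^sup>1\<close> of the one with
  respect to v, and P0 = \<open>\<partial>\<Lambda>\<close>. The densities are polynomial (of degree at most three) in v
  and its derivatives, so their first variations are exact, and integrating by parts on the
  circle gives \<open>\<delta>\<^sub>vH0 = \<Lambda>c\<close>, \<open>\<delta>\<^sub>vH1 = \<Lambda>(v\<cdot>c)\<close> and an explicit \<open>\<delta>\<^sub>vH2\<close>. The chain then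
  reduces to pointwise algebra: the part of P1 built from (g1, f1, h1) matches the quadratic
  part of H2, while its Lie-Poisson part, applied to v\<cdot>c, is the derivative of the gradient of
  the cubic part of H2 -- this is where the Novikov identities and the invariance of g0, f0, h0
  enter.\<close>

lemma pair_axis: "pair u (axis i 1) = u $ i"
proof -
  have "pair u (axis i 1) = (\<Sum>j\<in>UNIV. if j = i then u $ j else 0)"
    unfolding pair_def by (intro sum.cong) (auto simp: axis_def)
  then show ?thesis by simp
qed

lemma vec_eq_pairI: "(\<And>z. pair X z = pair Y z) \<Longrightarrow> X = Y"
  by (metis pair_axis vec_eq_iff)

lemma pair_chi_linear:
  assumes add: "\<And>x y. L (x + y) = L x + L y" and scale: "\<And>k x. L (k *s x) = k * L x"
  shows "pair (\<chi> i. L (axis i 1)) z = L z"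
proof -
  have "L 0 = 0" using scale[of 0 0] by simp
  then have L_sum: "L (sum F S) = (\<Sum>i\<in>S. L (F i))" for F and S :: "'b set"
    by (induction S rule: infinite_finite_induct) (auto simp: add)
  have "L z = L (\<Sum>i\<in>UNIV. (z$i) *s axis i 1)" by (simp add: basis_expansion)
  also have "\<dots> = (\<Sum>i\<in>UNIV. z$i * L (axis i 1))" by (simp add: L_sum scale)
  finally show ?thesis by (simp add: pair_def mult.commute)
qed

lemma cbilin_form_pair: "cbilin_form pair"
  by (auto simp: cbilin_form_def pair_def sum.distrib sum_distrib_left algebra_simps)

lemma scaleR_vec_complex: "r *\<^sub>R (x::complex ^ 'n::finite) = complex_of_real r *s x"
  unfolding vec_eq_iff by (simp add: scaleR_conv_of_real[where 'a=complex])


section \<open>Smooth functions of one real variable\<close>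

text \<open>The operator D only applies to vector-valued loops; densities are complex-valued, so the
  calculus is developed for the polymorphic version of the same operator.\<close>

definition vderiv :: "(real \<Rightarrow> 'a::real_normed_vector) \<Rightarrow> real \<Rightarrow> 'a" where
  "vderiv f = (\<lambda>x. vector_derivative f (at x))"

lemma D_eq_vderiv: "D = vderiv"
  by (simp add: fun_eq_iff D_def vderiv_def)

definition smooth :: "(real \<Rightarrow> 'a::real_normed_vector) \<Rightarrow> bool" where
  "smooth f \<longleftrightarrow> (\<forall>k x. (vderiv ^^ k) f differentiable (at x))"

definition unit_periodic :: "(real \<Rightarrow> 'a) \<Rightarrow> bool" where
  "unit_periodic f \<longleftrightarrow> (\<forall>x. f (x + 1) = f x)"

lemma loops_iff: "f \<in> loops \<longleftrightarrow> unit_periodic f \<and> smooth f"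
  by (simp add: loops_def unit_periodic_def smooth_def D_eq_vderiv)

fun smooth_upto :: "nat \<Rightarrow> (real \<Rightarrow> 'a::real_normed_vector) \<Rightarrow> bool" where
  "smooth_upto 0 f \<longleftrightarrow> (\<forall>x. f differentiable (at x))"
| "smooth_upto (Suc k) f \<longleftrightarrow> (\<forall>x. f differentiable (at x)) \<and> smooth_upto k (vderiv f)"

lemma smooth_upto_iff: "smooth_upto k f \<longleftrightarrow> (\<forall>j\<le>k. \<forall>x. (vderiv ^^ j) f differentiable (at x))"
proof (induction k arbitrary: f)
  case (Suc k)
  have "(\<forall>j\<le>Suc k. P j) \<longleftrightarrow> P 0 \<and> (\<forall>j\<le>k. P (Suc j))" for P
    by (metis Suc_le_mono le0 not0_implies_Suc)
  then show ?case
    by (simp add: Suc funpow_Suc_right del: funpow.simps(2))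
qed simp

lemma smooth_iff_upto: "smooth f \<longleftrightarrow> (\<forall>k. smooth_upto k f)"
  unfolding smooth_def smooth_upto_iff by blast

lemma smooth_differentiable: "smooth f \<Longrightarrow> f differentiable (at x)"
  unfolding smooth_def by (metis funpow_0)

lemma smooth_vderiv [simp]: "smooth f \<Longrightarrow> smooth (vderiv f)"
  unfolding smooth_def by (metis funpow_Suc_right o_apply)

lemma smooth_has_vector_derivative: "smooth f \<Longrightarrow> (f has_vector_derivative vderiv f x) (at x)"
  unfolding vderiv_def by (metis smooth_differentiable vector_derivative_works)

lemma smooth_continuous_on: "smooth f \<Longrightarrow> continuous_on S f"
  by (meson differentiable_at_imp_differentiable_on differentiable_imp_continuous_on
      smooth_differentiable)

lemma vderiv_add:
  "(\<And>x. f differentiable (at x)) \<Longrightarrow> (\<And>x. g differentiable (at x)) \<Longrightarrow>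
   vderiv (\<lambda>x. f x + g x) = (\<lambda>x. vderiv f x + vderiv g x)"
  unfolding vderiv_def
  by (rule ext, rule vector_derivative_at, intro has_vector_derivative_add)
     (auto simp: vector_derivative_works[symmetric])

lemma vderiv_bilinear:
  assumes B: "bounded_bilinear B"
    and f: "\<And>x. f differentiable (at x)" and g: "\<And>x. g differentiable (at x)"
  shows "vderiv (\<lambda>x. B (f x) (g x)) = (\<lambda>x. B (vderiv f x) (g x) + B (f x) (vderiv g x))"
  unfolding vderiv_def
  by (rule ext, rule vector_derivative_at, rule has_vector_derivative_eq_rhs,
      rule bounded_bilinear.has_vector_derivative[OF B])
     (use f g vector_derivative_works in auto)

lemma vderiv_linear:
  "bounded_linear L \<Longrightarrow> (\<And>x. f differentiable (at x)) \<Longrightarrow>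
   vderiv (\<lambda>x. L (f x)) = (\<lambda>x. L (vderiv f x))"
  unfolding vderiv_def
  by (rule ext, rule vector_derivative_at, rule bounded_linear.has_vector_derivative)
     (auto simp: vector_derivative_works[symmetric])

lemma vderiv_const [simp]: "vderiv (\<lambda>x. c) = (\<lambda>x. 0)"
  unfolding vderiv_def by (rule ext, rule vector_derivative_at) simp

lemma smooth_upto_add: "smooth_upto k f \<Longrightarrow> smooth_upto k g \<Longrightarrow> smooth_upto k (\<lambda>x. f x + g x)"
  by (induction k arbitrary: f g) (auto simp: vderiv_add)

lemma smooth_add [simp]: "smooth f \<Longrightarrow> smooth g \<Longrightarrow> smooth (\<lambda>x. f x + g x)"
  by (simp add: smooth_iff_upto smooth_upto_add)

lemma smooth_bilinear:
  assumes B: "bounded_bilinear B" shows "smooth f \<Longrightarrow> smooth g \<Longrightarrow> smooth (\<lambda>x. B (f x) (g x))"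
proof -
  have diff: "smooth f \<Longrightarrow> smooth g \<Longrightarrow> (\<lambda>x. B (f x) (g x)) differentiable (at x)" for f g x
    by (rule differentiableI_vector,
        rule bounded_bilinear.has_vector_derivative[OF B smooth_has_vector_derivative
          smooth_has_vector_derivative])
  have "smooth f \<Longrightarrow> smooth g \<Longrightarrow> smooth_upto k (\<lambda>x. B (f x) (g x))" for k f g
  proof (induction k arbitrary: f g)
    case (Suc k)
    then show ?case
      by (simp add: diff vderiv_bilinear[OF B] smooth_differentiable smooth_upto_add)
  qed (simp add: diff)
  then show "smooth f \<Longrightarrow> smooth g \<Longrightarrow> smooth (\<lambda>x. B (f x) (g x))"
    by (simp add: smooth_iff_upto)
qed

lemma smooth_linear:
  assumes L: "bounded_linear L" shows "smooth f \<Longrightarrow> smooth (\<lambda>x. L (f x))"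
proof -
  have diff: "smooth f \<Longrightarrow> (\<lambda>x. L (f x)) differentiable (at x)" for f x
    by (rule differentiableI_vector,
        rule bounded_linear.has_vector_derivative[OF L smooth_has_vector_derivative])
  have "smooth f \<Longrightarrow> smooth_upto k (\<lambda>x. L (f x))" for k f
  proof (induction k arbitrary: f)
    case (Suc k)
    then show ?case by (simp add: diff vderiv_linear[OF L] smooth_differentiable)
  qed (simp add: diff)
  then show "smooth f \<Longrightarrow> smooth (\<lambda>x. L (f x))"
    by (simp add: smooth_iff_upto)
qed

lemma smooth_const [simp]: "smooth (\<lambda>x. c)"
proof -
  have "(vderiv ^^ k) (\<lambda>x. c) = (\<lambda>x. if k = 0 then c else 0)" for k
    by (induction k) auto
  then show ?thesis unfolding smooth_def by auto
qed

lemma smooth_minus [simp]: assumes "smooth f" shows "smooth (\<lambda>x. - f x)"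
  using smooth_linear[OF bounded_linear_minus[OF bounded_linear_ident] assms] by simp

lemma smooth_diff [simp]: "smooth f \<Longrightarrow> smooth g \<Longrightarrow> smooth (\<lambda>x. f x - g x)"
  using smooth_add[of f "\<lambda>x. - g x"] by simp

lemma vderiv_add_smooth [simp]:
  "smooth f \<Longrightarrow> smooth g \<Longrightarrow> vderiv (\<lambda>x. f x + g x) = (\<lambda>x. vderiv f x + vderiv g x)"
  by (rule vderiv_add) (simp_all add: smooth_differentiable)

lemma vderiv_diff_smooth [simp]:
  "smooth f \<Longrightarrow> smooth g \<Longrightarrow> vderiv (\<lambda>x. f x - g x) = (\<lambda>x. vderiv f x - vderiv g x)"
  using vderiv_add[of f "\<lambda>x. - g x"]
    vderiv_linear[OF bounded_linear_minus[OF bounded_linear_ident], of g]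
  by (simp add: smooth_differentiable)

lemma smooth_mult_left [simp]: "smooth f \<Longrightarrow> smooth (\<lambda>x. k * (f x::complex))"
  by (rule smooth_linear[OF bounded_linear_mult_right])

lemma vderiv_mult_left [simp]:
  "smooth f \<Longrightarrow> vderiv (\<lambda>x. k * (f x::complex)) = (\<lambda>x. k * vderiv f x)"
  by (rule vderiv_linear[OF bounded_linear_mult_right]) (simp add: smooth_differentiable)

lemma smooth_divide [simp]: "smooth f \<Longrightarrow> smooth (\<lambda>x. (f x::complex) / k)"
  by (rule smooth_linear[OF bounded_linear_divide])

lemma vderiv_divide [simp]: "smooth f \<Longrightarrow> vderiv (\<lambda>x. (f x::complex) / k) = (\<lambda>x. vderiv f x / k)"
  by (rule vderiv_linear[OF bounded_linear_divide]) (simp add: smooth_differentiable)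

lemma bounded_linear_vector_scalar_mult: "bounded_linear (\<lambda>y::complex ^ 'n::finite. k *s y)"
  unfolding linear_conv_bounded_linear[symmetric] linear_iff
  by (simp add: scaleR_vec_complex vec_eq_iff algebra_simps)

lemma smooth_vector_scalar_mult [simp]: "smooth f \<Longrightarrow> smooth (\<lambda>x. k *s (f x::complex ^ 'n::finite))"
  by (rule smooth_linear[OF bounded_linear_vector_scalar_mult])

lemma vderiv_vector_scalar_mult [simp]:
  "smooth f \<Longrightarrow> vderiv (\<lambda>x. k *s (f x::complex ^ 'n::finite)) = (\<lambda>x. k *s vderiv f x)"
  by (rule vderiv_linear[OF bounded_linear_vector_scalar_mult]) (simp add: smooth_differentiable)

lemma unit_periodic_vderiv:
  assumes f: "unit_periodic f" "smooth f" shows "unit_periodic (vderiv f)"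
  unfolding unit_periodic_def
proof
  fix x
  have "((f \<circ> (\<lambda>y. y - 1)) has_vector_derivative (1 *\<^sub>R vderiv f x)) (at (x + 1))"
    by (rule vector_diff_chain_at) (auto intro!: derivative_eq_intros smooth_has_vector_derivative f)
  moreover have "f \<circ> (\<lambda>y. y - 1) = f"
    using f unfolding unit_periodic_def by (auto simp: fun_eq_iff) (metis diff_add_cancel)
  ultimately show "vderiv f (x + 1) = vderiv f x"
    unfolding vderiv_def by (simp add: vector_derivative_at)
qed

lemma integral_vderiv_unit_periodic:
  fixes h :: "real \<Rightarrow> 'a::banach"
  assumes "unit_periodic h" "smooth h" shows "integral {0..1} (vderiv h) = 0"
proof -
  have "(vderiv h has_integral (h 1 - h 0)) {0..1}"
    by (rule fundamental_theorem_of_calculus)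
       (auto intro: has_vector_derivative_at_within smooth_has_vector_derivative[OF assms(2)])
  moreover have "h 1 = h 0" using assms(1) unfolding unit_periodic_def by (metis add_0)
  ultimately show ?thesis by (simp add: integral_unique)
qed

lemma integral_add_vderiv_unit_periodic:
  fixes A B \<Phi> :: "real \<Rightarrow> 'a::euclidean_space"
  assumes "\<And>x. A x = B x + vderiv \<Phi> x" "continuous_on {0..1} B" "unit_periodic \<Phi>" "smooth \<Phi>"
  shows "integral {0..1} A = integral {0..1} B"
proof -
  have "integral {0..1} A = integral {0..1} B + integral {0..1} (vderiv \<Phi>)"
    unfolding assms(1)[abs_def]
    by (rule integral_add)
       (auto intro!: integrable_continuous_interval assms smooth_continuous_on smooth_vderiv)
  then show ?thesis using integral_vderiv_unit_periodic[OF assms(3,4)] by simp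
qed

section \<open>First variations of cubic integrands\<close>

text \<open>The integrands arising below are cubic polynomials in the perturbation parameter,
  which makes their first variation elementary.\<close>

definition cubic_perturbation :: "(complex \<Rightarrow> real \<Rightarrow> complex) \<Rightarrow> (real \<Rightarrow> complex) \<Rightarrow> bool" where
  "cubic_perturbation P A \<longleftrightarrow> (\<exists>A0 A2 A3.
     (\<forall>e x. P e x = A0 x + e * A x + e^2 * A2 x + e^3 * A3 x) \<and>
     continuous_on {0..1} A0 \<and> continuous_on {0..1} A \<and>
     continuous_on {0..1} A2 \<and> continuous_on {0..1} A3)"

lemma cubic_perturbation_integral_derivative:
  assumes "cubic_perturbation P A"
  shows "((\<lambda>e. integral {0..1} (P e)) has_field_derivative integral {0..1} A) (at 0)"
proof -
  obtain A0 A2 A3 where P: "\<And>e x. P e x = A0 x + e * A x + e^2 * A2 x + e^3 * A3 x"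
    and cont: "continuous_on {0..1} A0" "continuous_on {0..1} A"
      "continuous_on {0..1} A2" "continuous_on {0..1} A3"
    using assms unfolding cubic_perturbation_def by blast
  have int: "A0 integrable_on {0..1}" "A integrable_on {0..1}"
    "A2 integrable_on {0..1}" "A3 integrable_on {0..1}"
    using cont by (auto intro: integrable_continuous_interval)
  have "integral {0..1} (P e) = integral {0..1} A0 + e * integral {0..1} A
      + e^2 * integral {0..1} A2 + e^3 * integral {0..1} A3" for e
    unfolding P[abs_def] using int
    by (simp add: integral_add integrable_add integrable_on_mult_right)
  then show ?thesis
    by (simp only:) (rule derivative_eq_intros refl | simp)+
qed

lemma cubic_perturbation_add:
  assumes "cubic_perturbation P A" "cubic_perturbation Q B"
  shows "cubic_perturbation (\<lambda>e x. P e x + Q e x) (\<lambda>x. A x + B x)"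
proof -
  obtain A0 A2 A3 where "\<forall>e x. P e x = A0 x + e * A x + e^2 * A2 x + e^3 * A3 x"
    "continuous_on {0..1} A0" "continuous_on {0..1} A"
    "continuous_on {0..1} A2" "continuous_on {0..1} A3"
    using assms(1) unfolding cubic_perturbation_def by blast
  moreover obtain B0 B2 B3 where "\<forall>e x. Q e x = B0 x + e * B x + e^2 * B2 x + e^3 * B3 x"
    "continuous_on {0..1} B0" "continuous_on {0..1} B"
    "continuous_on {0..1} B2" "continuous_on {0..1} B3"
    using assms(2) unfolding cubic_perturbation_def by blast
  ultimately show ?thesis
    unfolding cubic_perturbation_def
    by (intro exI[of _ "\<lambda>x. A0 x + B0 x"] exI[of _ "\<lambda>x. A2 x + B2 x"] exI[of _ "\<lambda>x. A3 x + B3 x"])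
       (auto intro!: continuous_intros simp: algebra_simps)
qed

lemma cubic_perturbation_mult:
  assumes "cubic_perturbation P A" shows "cubic_perturbation (\<lambda>e x. k * P e x) (\<lambda>x. k * A x)"
proof -
  obtain A0 A2 A3 where "\<forall>e x. P e x = A0 x + e * A x + e^2 * A2 x + e^3 * A3 x"
    "continuous_on {0..1} A0" "continuous_on {0..1} A"
    "continuous_on {0..1} A2" "continuous_on {0..1} A3"
    using assms unfolding cubic_perturbation_def by blast
  then show ?thesis
    unfolding cubic_perturbation_def
    by (intro exI[of _ "\<lambda>x. k * A0 x"] exI[of _ "\<lambda>x. k * A2 x"] exI[of _ "\<lambda>x. k * A3 x"])
       (auto intro!: continuous_intros simp: algebra_simps)
qed

lemma cubic_perturbation_trilinear:
  fixes T :: "'n::finite vecC \<Rightarrow> 'n vecC \<Rightarrow> 'n vecC \<Rightarrow> complex"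
  assumes T1: "\<And>a a' b d. T (a + a') b d = T a b d + T a' b d" "\<And>k a b d. T (k *s a) b d = k * T a b d"
    and T2: "\<And>a b b' d. T a (b + b') d = T a b d + T a b' d" "\<And>k a b d. T a (k *s b) d = k * T a b d"
    and T3: "\<And>a b d d'. T a b (d + d') = T a b d + T a b d'" "\<And>k a b d. T a b (k *s d) = k * T a b d"
    and P: "\<And>e x. P e x = T (A x + e *s A' x) (B x + e *s B' x) (C x + e *s C' x)"
    and A1: "\<And>x. A1 x = T (A' x) (B x) (C x) + T (A x) (B' x) (C x) + T (A x) (B x) (C' x)"
    and cont: "continuous_on {0..1} (\<lambda>x. T (A x) (B x) (C x))"
      "continuous_on {0..1} (\<lambda>x. T (A' x) (B x) (C x))"
      "continuous_on {0..1} (\<lambda>x. T (A x) (B' x) (C x))"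
      "continuous_on {0..1} (\<lambda>x. T (A x) (B x) (C' x))"
      "continuous_on {0..1} (\<lambda>x. T (A' x) (B' x) (C x))"
      "continuous_on {0..1} (\<lambda>x. T (A' x) (B x) (C' x))"
      "continuous_on {0..1} (\<lambda>x. T (A x) (B' x) (C' x))"
      "continuous_on {0..1} (\<lambda>x. T (A' x) (B' x) (C' x))"
  shows "cubic_perturbation P A1"
  unfolding cubic_perturbation_def
proof (intro exI conjI)
  show "\<forall>e x. P e x = T (A x) (B x) (C x) + e * A1 x
      + e^2 * (T (A' x) (B' x) (C x) + T (A' x) (B x) (C' x) + T (A x) (B' x) (C' x))
      + e^3 * T (A' x) (B' x) (C' x)"
    by (simp add: P A1 T1 T2 T3 algebra_simps power2_eq_square power3_eq_cube)
  show "continuous_on {0..1} A1" unfolding A1[abs_def] using cont by (intro continuous_intros)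
qed (use cont in \<open>auto intro!: continuous_intros\<close>)

lemma cubic_perturbation_bilinear:
  fixes T :: "'n::finite vecC \<Rightarrow> 'n vecC \<Rightarrow> complex"
  assumes T1: "\<And>a a' b. T (a + a') b = T a b + T a' b" "\<And>k a b. T (k *s a) b = k * T a b"
    and T2: "\<And>a b b'. T a (b + b') = T a b + T a b'" "\<And>k a b. T a (k *s b) = k * T a b"
    and P: "\<And>e x. P e x = T (A x + e *s A' x) (B x + e *s B' x)"
    and A1: "\<And>x. A1 x = T (A' x) (B x) + T (A x) (B' x)"
    and cont: "continuous_on {0..1} (\<lambda>x. T (A x) (B x))"
      "continuous_on {0..1} (\<lambda>x. T (A' x) (B x))"
      "continuous_on {0..1} (\<lambda>x. T (A x) (B' x))"
      "continuous_on {0..1} (\<lambda>x. T (A' x) (B' x))"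
  shows "cubic_perturbation P A1"
  unfolding cubic_perturbation_def
proof (intro exI conjI)
  show "\<forall>e x. P e x = T (A x) (B x) + e * A1 x + e^2 * T (A' x) (B' x) + e^3 * 0"
    by (simp add: P A1 T1 T2 algebra_simps power2_eq_square)
  show "continuous_on {0..1} A1" unfolding A1[abs_def] using cont by (intro continuous_intros)
qed (use cont in \<open>auto intro!: continuous_intros\<close>)

locale cbilinear_form =
  fixes q :: "'n::finite vecC \<Rightarrow> 'n vecC \<Rightarrow> complex"
  assumes cbilin: "cbilin_form q"
begin

lemma add_left [simp]: "q (a + b) d = q a d + q b d"
  using cbilin by (simp add: cbilin_form_def)
lemma add_right [simp]: "q a (b + d) = q a b + q a d"
  using cbilin by (simp add: cbilin_form_def)
lemma scale_left [simp]: "q (k *s a) d = k * q a d"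
  using cbilin by (simp add: cbilin_form_def)
lemma scale_right [simp]: "q a (k *s d) = k * q a d"
  using cbilin by (simp add: cbilin_form_def)
lemma zero_left [simp]: "q 0 d = 0"
  using scale_left[of 0 0 d] by simp
lemma zero_right [simp]: "q a 0 = 0"
  using scale_right[of a 0 0] by simp
lemma minus_left [simp]: "q (- a) d = - q a d"
  using scale_left[of "-1" a d] by simp
lemma minus_right [simp]: "q a (- d) = - q a d"
  using scale_right[of a "-1" d] by simp
lemma diff_left [simp]: "q (a - b) d = q a d - q b d"
  using add_left[of a "-b" d] by simp
lemma diff_right [simp]: "q a (b - d) = q a b - q a d"
  using add_right[of a b "-d"] by simp

lemma bounded_bilinear: "bounded_bilinear q"
  unfolding bilinear_conv_bounded_bilinear[symmetric] bilinear_def linear_iff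
  by (simp add: scaleR_vec_complex scaleR_conv_of_real)

lemma smooth_apply [simp]: "smooth f \<Longrightarrow> smooth g \<Longrightarrow> smooth (\<lambda>x. q (f x) (g x))"
  by (rule smooth_bilinear[OF bounded_bilinear])

lemma vderiv_apply [simp]:
  "smooth f \<Longrightarrow> smooth g \<Longrightarrow> vderiv (\<lambda>x. q (f x) (g x)) = (\<lambda>x. q (vderiv f x) (g x) + q (f x) (vderiv g x))"
  by (rule vderiv_bilinear[OF bounded_bilinear]) (simp_all add: smooth_differentiable)

end

interpretation pair: cbilinear_form pair
  by unfold_locales (rule cbilin_form_pair)

context cbilinear_form
begin

lemma pair_tl [simp]: "pair (tl q a) z = q a z"
  unfolding tl_def by (rule pair_chi_linear) simp_all

lemma tl_add [simp]: "tl q (a + b) = tl q a + tl q b"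
  by (intro vec_eq_pairI) simp
lemma tl_scale [simp]: "tl q (k *s a) = k *s tl q a"
  by (intro vec_eq_pairI) simp

lemma tl_zero [simp]: "tl q 0 = 0"
  by (intro vec_eq_pairI) simp

lemma bounded_linear_tl: "bounded_linear (tl q)"
  unfolding linear_conv_bounded_linear[symmetric] linear_iff
  by (simp add: scaleR_vec_complex)

lemma smooth_tl [simp]: "smooth f \<Longrightarrow> smooth (\<lambda>x. tl q (f x))"
  by (rule smooth_linear[OF bounded_linear_tl])

lemma vderiv_tl [simp]: "smooth f \<Longrightarrow> vderiv (\<lambda>x. tl q (f x)) = (\<lambda>x. tl q (vderiv f x))"
  by (rule vderiv_linear[OF bounded_linear_tl]) (simp add: smooth_differentiable)

end

locale cbilinear_product =
  fixes m :: "'n::finite vecC \<Rightarrow> 'n vecC \<Rightarrow> 'n vecC"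
  assumes cbilin: "cbilin_prod m"
begin

lemma add_left [simp]: "m (a + b) d = m a d + m b d"
  using cbilin by (simp add: cbilin_prod_def)
lemma add_right [simp]: "m a (b + d) = m a b + m a d"
  using cbilin by (simp add: cbilin_prod_def)
lemma scale_left [simp]: "m (k *s a) d = k *s m a d"
  using cbilin by (simp add: cbilin_prod_def)
lemma scale_right [simp]: "m a (k *s d) = k *s m a d"
  using cbilin by (simp add: cbilin_prod_def)
lemma zero_left [simp]: "m 0 d = 0"
  using scale_left[of 0 0 d] by simp
lemma zero_right [simp]: "m a 0 = 0"
  using scale_right[of a 0 0] by simp
lemma minus_left [simp]: "m (- a) d = - m a d"
  using scale_left[of "-1" a d] by (simp add: vec_eq_iff)
lemma minus_right [simp]: "m a (- d) = - m a d"
  using scale_right[of a "-1" d] by (simp add: vec_eq_iff)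
lemma diff_left [simp]: "m (a - b) d = m a d - m b d"
  using add_left[of a "-b" d] by simp
lemma diff_right [simp]: "m a (b - d) = m a b - m a d"
  using add_right[of a b "-d"] by simp

lemma bounded_bilinear: "bounded_bilinear m"
  unfolding bilinear_conv_bounded_bilinear[symmetric] bilinear_def linear_iff
  by (simp add: scaleR_vec_complex)

lemma smooth_apply [simp]: "smooth f \<Longrightarrow> smooth g \<Longrightarrow> smooth (\<lambda>x. m (f x) (g x))"
  by (rule smooth_bilinear[OF bounded_bilinear])

lemma vderiv_apply [simp]:
  "smooth f \<Longrightarrow> smooth g \<Longrightarrow> vderiv (\<lambda>x. m (f x) (g x)) = (\<lambda>x. m (vderiv f x) (g x) + m (f x) (vderiv g x))"
  by (rule vderiv_bilinear[OF bounded_bilinear]) (simp_all add: smooth_differentiable)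

lemma pair_Lst [simp]: "pair (Lst m a u) z = pair u (m a z)"
  unfolding Lst_def by (rule pair_chi_linear) simp_all

lemma pair_Rst [simp]: "pair (Rst m b u) z = pair u (m z b)"
  unfolding Rst_def by (rule pair_chi_linear) simp_all

lemma cbilin_prod_Lst: "cbilin_prod (Lst m)"
  unfolding cbilin_prod_def by (intro conjI allI vec_eq_pairI) simp_all

lemma cbilin_prod_Rst: "cbilin_prod (Rst m)"
  unfolding cbilin_prod_def by (intro conjI allI vec_eq_pairI) simp_all

end

section \<open>Novikov algebras and invariant forms\<close>

locale novikov_algebra =
  fixes m :: "'n::finite vecC \<Rightarrow> 'n vecC \<Rightarrow> 'n vecC"
  assumes novikov: "novikov m"

sublocale novikov_algebra \<subseteq> m: cbilinear_product m
  using novikov by unfold_locales (simp add: novikov_def)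

context novikov_algebra
begin

lemma right_commute: "m (m a b) d = m (m a d) b"
  using novikov by (simp add: novikov_def)

lemma left_symmetric: "m a (m b d) = m (m a b) d - m (m b a) d + m b (m a d)"
  using novikov by (simp add: novikov_def algebra_simps)

end

sublocale novikov_algebra \<subseteq> Lst: cbilinear_product "Lst m"
  by unfold_locales (rule m.cbilin_prod_Lst)

sublocale novikov_algebra \<subseteq> Rst: cbilinear_product "Rst m"
  by unfold_locales (rule m.cbilin_prod_Rst)

locale novikov_form = novikov_algebra m + q: cbilinear_form q
  for m :: "'n::finite vecC \<Rightarrow> 'n vecC \<Rightarrow> 'n vecC" and q

locale invariant_symmetric_form = novikov_form +
  assumes commute: "q a b = q b a"
    and invariant: "q (m a b) d = q a (m d b)"
begin

lemma swap: "q a (m b y) = q b (m a y)"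
  using invariant[of b y a] commute[of a] by simp

lemma Rst_tl: "Rst m b (tl q a) = tl q (m a b)"
  by (rule vec_eq_pairI) (simp add: swap[of a _ b] commute[of _ "m a b"])

lemma swap_mult_right: "q p (m (m r c) z) = q r (m (m p c) z)"
proof -
  have "q p (m (m r c) z) = q (m r c) (m p z)" by (rule swap)
  also have "\<dots> = q r (m (m p z) c)" by (rule invariant)
  also have "\<dots> = q r (m (m p c) z)" by (simp only: right_commute)
  finally show ?thesis .
qed

end

locale invariant_skew_form = novikov_form +
  assumes skew: "q a b = - q b a"
    and invariant: "q (m a b) d = q a (m d b)"
    and cyclic: "q (m a b) d + q (m b d) a + q (m d a) b = 0"
begin

lemma swap: "q a (m b y) = - q b (m a y)"
  using invariant[of b y a] skew[of a "m b y"] by simp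

lemma Rst_tl: "Rst m b (tl q a) = tl q (m a b)"
  by (rule vec_eq_pairI) (simp add: swap[of a _ b] skew[of _ "m a b"])

lemma mult_self_vanish: "q a (m (m a b) z) = 0"
proof -
  have "q a (m (m a b) z) = - q (m a b) (m a z)" by (rule swap)
  also have "\<dots> = - q a (m (m a z) b)" by (simp only: invariant)
  also have "\<dots> = - q a (m (m a b) z)" by (simp only: right_commute)
  finally show ?thesis by simp
qed

lemma swap_left_symmetric: "q a (m p (m z c)) = q z (m p (m a c)) - q z (m a (m p c))"
proof -
  have cyc: "q (m p z) y = - q z (m p y) + q z (m y p)" for y
    using cyclic[of p z y] invariant[of z y p] skew[of "m y p" z]
    by (simp add: algebra_simps eq_neg_iff_add_eq_0)
  have "q a (m p (m z c)) = q a (m (m p z) c) - q a (m (m z p) c) + q a (m z (m p c))"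
    by (subst left_symmetric) simp
  also have "q a (m (m p z) c) = q z (m p (m a c)) - q z (m (m a c) p)"
    using swap[of a "m p z" c] cyc[of "m a c"] by simp
  also have "q a (m (m z p) c) = - q z (m (m a c) p)"
    using swap[of a "m z p" c] invariant[of z p "m a c"] by simp
  also have "q a (m z (m p c)) = - q z (m a (m p c))" by (rule swap)
  finally show ?thesis by simp
qed

end

locale totally_symmetric_form = novikov_form +
  assumes commute: "q a b = q b a"
    and total: "q (m a b) d = q (m a d) b \<and> q (m a b) d = q (m b a) d
                \<and> q (m a b) d = q (m b d) a \<and> q (m a b) d = q (m d a) b
                \<and> q (m a b) d = q (m d b) a"
begin

lemma swap: "q a (m b y) = q b (m a y)"
proof -
  have "q a (m b y) = q (m b y) a" by (rule commute)
  also have "\<dots> = q (m a y) b" using total[of b y a] by blast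
  also have "\<dots> = q b (m a y)" by (rule commute)
  finally show ?thesis .
qed

lemma Rst_tl: "Rst m b (tl q a) = tl q (m a b)"
  by (rule vec_eq_pairI) (simp add: swap[of a _ b] commute[of _ "m a b"])

lemma mult_left: "q (m a c) y = q a (m y c)"
  using commute[of "m a c" y] swap[of y a c] by simp

lemma mult_right: "q x (m a b) = q a (m b x)"
proof -
  have "q x (m a b) = q (m a b) x" by (rule commute)
  also have "\<dots> = q (m b x) a" using total[of a b x] by blast
  also have "\<dots> = q a (m b x)" by (rule commute)
  finally show ?thesis .
qed

lemma mult_exchange: "q (m a b) x = q (m a x) b"
  using total[of a b x] by blast

lemma mult_right_assoc: "q w (m x (m y c)) = q w (m (m y x) c)"
proof -
  have "q w (m x (m y c)) = q (m x (m y c)) w" by (rule commute)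
  also have "\<dots> = q (m (m y c) x) w" using total[of x "m y c" w] by blast
  also have "\<dots> = q (m (m y x) c) w" by (simp only: right_commute)
  also have "\<dots> = q w (m (m y x) c)" by (rule commute)
  finally show ?thesis .
qed

lemma mult_right_commute: "q w (m (m x y) c) = q w (m (m y x) c)"
proof -
  have "q w (m (m x y) c) = q (m x y) (m w c)" by (rule swap)
  also have "\<dots> = q (m y x) (m w c)" using total[of x y "m w c"] by blast
  also have "\<dots> = q w (m (m y x) c)" by (rule swap)
  finally show ?thesis .
qed

end

text \<open>The forms (g, f, h) of one operator of the Poisson pencil: P0 is built from (g0, f0, h0);
  P1 is built from (g1, f1, h1) plus the Lie-Poisson part of the Novikov product.\<close>

locale poisson_triple =
  novikov_algebra m + g: invariant_symmetric_form m g + f: invariant_skew_form m f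
  + h: totally_symmetric_form m h
  for m g f h

lemma loops_smooth: "\<gamma> \<in> loops \<Longrightarrow> smooth \<gamma>"
  by (simp add: loops_iff)

lemma loops_periodic: "\<gamma> \<in> loops \<Longrightarrow> \<gamma> (x + 1) = \<gamma> x"
  by (simp add: loops_iff unit_periodic_def)

lemma loops_vderiv: "\<gamma> \<in> loops \<Longrightarrow> vderiv \<gamma> \<in> loops"
  by (simp add: loops_iff unit_periodic_vderiv)

lemma loopsI: "smooth \<gamma> \<Longrightarrow> (\<And>x. \<gamma> (x + 1) = \<gamma> x) \<Longrightarrow> \<gamma> \<in> loops"
  by (simp add: loops_iff unit_periodic_def)

lemma Lam_eq: "Lam g f h \<gamma> = (\<lambda>x. tl g (\<gamma> x) + tl f (vderiv \<gamma> x) + tl h (vderiv (vderiv \<gamma>) x))"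
  by (simp add: Lam_def D_eq_vderiv)

lemma P0_eq_Lam_vderiv: "P0 g f h \<gamma> = Lam g f h (vderiv \<gamma>)"
  by (simp add: P0_def Lam_def D_eq_vderiv)

definition lie_poisson :: "('n::finite vecC \<Rightarrow> 'n vecC \<Rightarrow> 'n vecC) \<Rightarrow> (real \<Rightarrow> 'n vecC)
    \<Rightarrow> (real \<Rightarrow> 'n vecC) \<Rightarrow> real \<Rightarrow> 'n vecC" where
  "lie_poisson m u \<gamma> = (\<lambda>x. vderiv (\<lambda>y. Rst m (\<gamma> y) (u y)) x + Lst m (vderiv \<gamma> x) (u x))"

lemma P1_eq_lie_poisson_add_P0: "P1 m g f h u \<gamma> = (\<lambda>x. lie_poisson m u \<gamma> x + P0 g f h \<gamma> x)"
  by (simp add: P1_def P0_def lie_poisson_def D_eq_vderiv add.assoc)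

locale novikov_bihamiltonian =
  novikov_algebra m + t0: poisson_triple m g0 f0 h0 + t1: poisson_triple m g1 f1 h1
  for m :: "'n::finite vecC \<Rightarrow> 'n vecC \<Rightarrow> 'n vecC" and g0 f0 h0 g1 f1 h1 +
  assumes Lam_bij: "bij_betw (Lam g0 f0 h0) loops loops"
begin

abbreviation \<Lambda> where "\<Lambda> \<equiv> Lam g0 f0 h0"
abbreviation \<Lambda>inv where "\<Lambda>inv \<equiv> Lam_inv g0 f0 h0"

lemma Lam_inv_in_loops: "y \<in> loops \<Longrightarrow> \<Lambda>inv y \<in> loops"
  unfolding Lam_inv_def using Lam_bij unfolding bij_betw_def by (auto intro: inv_into_into)

lemma Lam_Lam_inv: "y \<in> loops \<Longrightarrow> \<Lambda> (\<Lambda>inv y) = y"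
  unfolding Lam_inv_def using Lam_bij by (simp add: bij_betw_def f_inv_into_f)

lemma Lam_inv_eqI: "\<gamma> \<in> loops \<Longrightarrow> \<Lambda> \<gamma> = y \<Longrightarrow> \<Lambda>inv y = \<gamma>"
  unfolding Lam_inv_def using Lam_bij by (auto simp: bij_betw_def inv_into_f_f)

lemma Lam_self_adjoint:
  assumes z: "z \<in> loops" and \<gamma>: "\<gamma> \<in> loops"
  shows "integral {0..1} (\<lambda>x. pair (\<Lambda> z x) (\<gamma> x)) = integral {0..1} (\<lambda>x. pair (\<Lambda> \<gamma> x) (z x))"
proof (rule integral_add_vderiv_unit_periodic)
  have smooth: "smooth z" "smooth \<gamma>"
    using z \<gamma> by (simp_all add: loops_smooth)
  let ?\<Phi> = "\<lambda>x. f0 (z x) (\<gamma> x) + h0 (vderiv z x) (\<gamma> x) - h0 (z x) (vderiv \<gamma> x)"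
  show "pair (\<Lambda> z x) (\<gamma> x) = pair (\<Lambda> \<gamma> x) (z x) + vderiv ?\<Phi> x" for x
    using smooth
    by (simp add: Lam_eq t0.g.commute[of "\<gamma> x"] t0.f.skew[of "vderiv \<gamma> x"]
        t0.h.commute[of "vderiv (vderiv \<gamma>) x"])
  show "continuous_on {0..1} (\<lambda>x. pair (\<Lambda> \<gamma> x) (z x))"
    using smooth by (intro smooth_continuous_on) (simp add: Lam_eq)
  show "unit_periodic ?\<Phi>"
    using z \<gamma> by (simp add: unit_periodic_def loops_periodic loops_vderiv)
  show "smooth ?\<Phi>"
    using smooth by simp
qed

lemma Lam_inv_add_scale:
  assumes u: "u \<in> loops" and w: "w \<in> loops"
  shows "\<Lambda>inv (\<lambda>x. u x + e *s w x) = (\<lambda>x. \<Lambda>inv u x + e *s \<Lambda>inv w x)"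
proof (rule Lam_inv_eqI)
  have loops: "\<Lambda>inv u \<in> loops" "\<Lambda>inv w \<in> loops"
    using u w by (simp_all add: Lam_inv_in_loops)
  then show "(\<lambda>x. \<Lambda>inv u x + e *s \<Lambda>inv w x) \<in> loops"
    by (intro loopsI) (simp_all add: loops_smooth loops_periodic)
  have "\<Lambda> (\<lambda>x. \<Lambda>inv u x + e *s \<Lambda>inv w x) = (\<lambda>x. \<Lambda> (\<Lambda>inv u) x + e *s \<Lambda> (\<Lambda>inv w) x)"
    using loops by (simp add: Lam_eq loops_smooth algebra_simps)
  then show "\<Lambda> (\<lambda>x. \<Lambda>inv u x + e *s \<Lambda>inv w x) = (\<lambda>x. u x + e *s w x)"
    using u w by (simp add: Lam_Lam_inv)
qed

text \<open>Perturbing u by w perturbs v = \<open>\<Lambda>\<^sup>-\<^sup>1u\<close> by z = \<open>\<Lambda>\<^sup>-\<^sup>1w\<close>, and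
  \<open>\<integral>(w,\<gamma>) = \<integral>(\<Lambda>\<gamma>, z)\<close> by self-adjointness.\<close>

lemma has_var_deriv_functional_vI:
  fixes dens :: "'n vecC \<Rightarrow> 'n vecC \<Rightarrow> 'n vecC \<Rightarrow> complex"
  assumes u: "u \<in> loops" and \<gamma>: "\<gamma> \<in> loops"
    and cubic: "\<And>z. z \<in> loops \<Longrightarrow> cubic_perturbation
      (\<lambda>e x. dens (\<Lambda>inv u x + e *s z x) (vderiv (\<Lambda>inv u) x + e *s vderiv z x)
                  (vderiv (vderiv (\<Lambda>inv u)) x + e *s vderiv (vderiv z) x)) (V z)"
    and variation: "\<And>z. z \<in> loops \<Longrightarrow>
      integral {0..1} (V z) = integral {0..1} (\<lambda>x. pair (\<Lambda> \<gamma> x) (z x))"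
  shows "has_var_deriv (functional_v g0 f0 h0 dens) u \<gamma>"
  unfolding has_var_deriv_def
proof (intro conjI ballI \<gamma>)
  fix w :: "real \<Rightarrow> 'n vecC" assume w: "w \<in> loops"
  let ?v = "\<Lambda>inv u" and ?z = "\<Lambda>inv w"
  have loops: "?v \<in> loops" "?z \<in> loops" using u w by (simp_all add: Lam_inv_in_loops)
  have functional: "functional_v g0 f0 h0 dens (\<lambda>x. u x + e *s w x) =
     integral {0..1} (\<lambda>x. dens (?v x + e *s ?z x) (vderiv ?v x + e *s vderiv ?z x)
        (vderiv (vderiv ?v) x + e *s vderiv (vderiv ?z) x))" for e
    unfolding functional_v_def Let_def Lam_inv_add_scale[OF u w] D_eq_vderiv
    using loops by (simp add: loops_smooth)
  have "integral {0..1} (\<lambda>x. pair (w x) (\<gamma> x)) = integral {0..1} (\<lambda>x. pair (\<Lambda> ?z x) (\<gamma> x))"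
    using w by (simp add: Lam_Lam_inv)
  also have "\<dots> = integral {0..1} (V ?z)"
    using Lam_self_adjoint[OF loops(2) \<gamma>] variation[OF loops(2)] by simp
  finally show "((\<lambda>e. functional_v g0 f0 h0 dens (\<lambda>x. u x + e *s w x)) has_field_derivative
      integral {0..1} (\<lambda>x. pair (w x) (\<gamma> x))) (at 0)"
    unfolding functional using cubic_perturbation_integral_derivative[OF cubic[OF loops(2)]] by simp
qed

end


section \<open>Densities of the Hamiltonians and their first variations\<close>

context poisson_triple
begin

text \<open>The pointwise algebra behind the first variations below; p, p1, p2 stand for
  v, v', v'' and z, z1, z2 for z, z', z''.\<close>

lemma quadratic_variation_identity:
  "1/2 * (g z (m p c) + g p (m z c)) + 1/2 * (f z1 (m p c) + f p1 (m z c))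
    + 1/2 * (h z2 (m p c) + h p2 (m z c))
   = g (m p c) z + f (m p1 c) z + h (m p2 c) z
    + (1/2 * (f z1 (m p c) + f z (m p1 c)) + 1/2 * (h z2 (m p c) + h z1 (m p1 c))
       - 1/2 * (h z1 (m p1 c) + h z (m p2 c)))"
proof -
  have "g p (m z c) = g z (m p c)" "f p1 (m z c) = - f z (m p1 c)" "h p2 (m z c) = h z (m p2 c)"
    by (rule g.swap f.swap h.swap)+
  moreover have "g (m p c) z = g z (m p c)" "f (m p1 c) z = - f z (m p1 c)"
    "h (m p2 c) z = h z (m p2 c)"
    by (rule g.commute f.skew h.commute)+
  ultimately show ?thesis by (simp add: field_simps)
qed

lemma cubic_variation_identity:
  "1/3 * (g z (m p (m p c)) + g p (m z (m p c)) + g p (m p (m z c)))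
 + 1/3 * (f z1 (m p (m p c)) + f p1 (m z (m p c)) + f p1 (m p (m z c)))
 + 1/3 * (h (m z c) (m p p2) + h (m p c) (m z p2) + h (m p c) (m p z2))
 + 1/6 * (g (m z c) (m p p) + g (m p c) (m z p) + g (m p c) (m p z))
 + 1/6 * (h (m z1 c) (m p1 p) + h (m p1 c) (m z1 p) + h (m p1 c) (m p1 z))
 = g (m p (m p c)) z + 1/2 * g (m p c) (m p z) + f (m p1 (m p c)) z + h (m p2 (m p c)) z
   + 1/2 * h (m (m p1 c) p1) z
   + (1/3 * (f z1 (m p (m p c)) + f z (m p1 (m p c)) + f z (m p (m p1 c)))
 + 1/3 * (h z2 (m p (m p c)) + h z1 (m p1 (m p c)) + h z1 (m p (m p1 c)))
 - 1/3 * (h z1 (m p1 (m p c)) + h z1 (m p (m p1 c)) + h z (m p2 (m p c))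
          + 2 * h z (m p1 (m p1 c)) + h z (m p (m p2 c)))
 + 1/6 * (h z1 (m (m p1 p) c) + h z (m (m p2 p) c) + h z (m (m p1 p1) c))
 + 1/6 * (h (m p1 (m p1 c)) z + h (m p (m p2 c)) z + h (m p (m p1 c)) z1))"
proof -
  have g_pz: "g p (m (m p z) c) = g (m p c) (m p z)"
    using g.invariant[of "m p z" c p] g.commute[of p "m (m p z) c"] g.commute[of "m p z" "m p c"]
    by simp
  have g_zp: "g p (m (m z p) c) = g z (m (m p p) c)"
    using g.invariant[of "m z p" c p] g.commute[of p "m (m z p) c"] g.invariant[of z p "m p c"]
      right_commute[of p c p] g.commute[of "m z p" "m p c"]
    by simp
  have e1: "g p (m z (m p c)) = g z (m p (m p c))" by (rule g.swap)
  have e2: "g p (m p (m z c)) = g (m p c) (m p z) - g z (m (m p p) c) + g z (m p (m p c))"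
    by (subst left_symmetric) (simp add: g_pz g_zp g.swap[of p z])
  have e3: "g (m z c) (m p p) = g z (m (m p p) c)" by (rule g.invariant)
  have e4: "g (m p c) (m z p) = g z (m (m p p) c)"
    using g.commute[of "m p c" "m z p"] g.invariant[of z p "m p c"] right_commute[of p c p] by simp
  have e5: "g (m p (m p c)) z = g z (m p (m p c))" by (rule g.commute)
  have e6: "f p1 (m z (m p c)) = - f z (m p1 (m p c))" by (rule f.swap)
  have e7: "f p1 (m p (m z c)) = f z (m p (m p1 c)) - f z (m p1 (m p c))"
    by (rule f.swap_left_symmetric)
  have e8: "f (m p1 (m p c)) z = - f z (m p1 (m p c))" by (rule f.skew)
  have e9: "h (m z c) (m p p2) = h z (m (m p p2) c)" by (rule h.mult_left)
  have e10: "h (m p c) (m z p2) = h z (m (m p p2) c)"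
    using h.mult_right[of "m p c" z p2] h.mult_right_assoc[of z p2 p c] by simp
  have e11: "h (m p c) (m p z2) = h z2 (m p (m p c))"
    using h.mult_right[of "m p c" p z2] h.swap[of p z2 "m p c"] by simp
  have e12: "h (m z1 c) (m p1 p) = h z1 (m (m p1 p) c)" by (rule h.mult_left)
  have e13: "h (m p1 c) (m z1 p) = h z1 (m (m p1 p) c)"
    using h.mult_right[of "m p1 c" z1 p] h.mult_right_assoc[of z1 p p1 c] by simp
  have e14: "h (m p1 c) (m p1 z) = h z (m (m p1 p1) c)"
    using h.mult_right[of "m p1 c" p1 z] h.swap[of p1 z "m p1 c"] h.mult_right_assoc[of z p1 p1 c]
    by simp
  have e15: "h (m p2 (m p c)) z = h z (m (m p p2) c)"
    using h.commute[of "m p2 (m p c)" z] h.mult_right_assoc[of z p2 p c] by simp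
  have e16: "h (m (m p1 c) p1) z = h z (m (m p1 p1) c)"
    using h.commute[of "m (m p1 c) p1" z] right_commute[of p1 c p1] by simp
  have e17: "h z (m p2 (m p c)) = h z (m (m p p2) c)" by (rule h.mult_right_assoc)
  have e18: "h z (m p1 (m p1 c)) = h z (m (m p1 p1) c)" by (rule h.mult_right_assoc)
  have e20: "h z (m (m p2 p) c) = h z (m (m p p2) c)" by (rule h.mult_right_commute)
  have e19: "h z (m p (m p2 c)) = h z (m (m p p2) c)"
    using h.mult_right_assoc[of z p p2 c] e20 by simp
  have e21: "h (m p1 (m p1 c)) z = h z (m (m p1 p1) c)"
    using h.commute[of "m p1 (m p1 c)" z] e18 by simp
  have e22: "h (m p (m p2 c)) z = h z (m (m p p2) c)"
    using h.commute[of "m p (m p2 c)" z] e19 by simp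
  have e23: "h (m p (m p1 c)) z1 = h z1 (m (m p1 p) c)"
    using h.commute[of "m p (m p1 c)" z1] h.mult_right_assoc[of z1 p p1 c] by simp
  show ?thesis
    unfolding e1 e2 e3 e4 e5 e6 e7 e8 e9 e10 e11 e12 e13 e14 e15 e16 e17 e18 e19 e20 e21 e22 e23
    by (simp add: field_simps)
qed

lemma vderiv_Lam: "smooth \<gamma> \<Longrightarrow> vderiv (Lam g f h \<gamma>) = Lam g f h (vderiv \<gamma>)"
  by (simp add: Lam_eq)

definition quadratic_density :: "'a vecC \<Rightarrow> 'a vecC \<Rightarrow> 'a vecC \<Rightarrow> 'a vecC \<Rightarrow> complex" where
  "quadratic_density c v vx vxx = 1/2 * g v (m v c) + 1/2 * f vx (m v c) + 1/2 * h vxx (m v c)"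

definition quadratic_variation :: "'a vecC \<Rightarrow> (real \<Rightarrow> 'a vecC) \<Rightarrow> (real \<Rightarrow> 'a vecC) \<Rightarrow> real \<Rightarrow> complex" where
  "quadratic_variation c v z = (\<lambda>x.
       1/2 * (g (z x) (m (v x) c) + g (v x) (m (z x) c))
     + 1/2 * (f (vderiv z x) (m (v x) c) + f (vderiv v x) (m (z x) c))
     + 1/2 * (h (vderiv (vderiv z) x) (m (v x) c) + h (vderiv (vderiv v) x) (m (z x) c)))"

definition quadratic_flux :: "'a vecC \<Rightarrow> (real \<Rightarrow> 'a vecC) \<Rightarrow> (real \<Rightarrow> 'a vecC) \<Rightarrow> real \<Rightarrow> complex" where
  "quadratic_flux c v z = (\<lambda>x. 1/2 * f (z x) (m (v x) c) + 1/2 * h (vderiv z x) (m (v x) c)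
     - 1/2 * h (z x) (m (vderiv v x) c))"

lemma quadratic_density_cubic_perturbation:
  assumes v: "smooth v" and z: "smooth z"
  shows "cubic_perturbation (\<lambda>e x. quadratic_density c (v x + e *s z x) (vderiv v x + e *s vderiv z x)
      (vderiv (vderiv v) x + e *s vderiv (vderiv z) x)) (quadratic_variation c v z)"
proof -
  have "cubic_perturbation (\<lambda>e x. g (v x + e *s z x) (m (v x + e *s z x) c))
      (\<lambda>x. g (z x) (m (v x) c) + g (v x) (m (z x) c))"
    by (rule cubic_perturbation_bilinear[where T="\<lambda>a b. g a (m b c)"])
       (use v z in \<open>auto intro!: smooth_continuous_on\<close>)
  moreover have "cubic_perturbation (\<lambda>e x. f (vderiv v x + e *s vderiv z x) (m (v x + e *s z x) c))
      (\<lambda>x. f (vderiv z x) (m (v x) c) + f (vderiv v x) (m (z x) c))"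
    by (rule cubic_perturbation_bilinear[where T="\<lambda>a b. f a (m b c)"])
       (use v z in \<open>auto intro!: smooth_continuous_on\<close>)
  moreover have "cubic_perturbation
      (\<lambda>e x. h (vderiv (vderiv v) x + e *s vderiv (vderiv z) x) (m (v x + e *s z x) c))
      (\<lambda>x. h (vderiv (vderiv z) x) (m (v x) c) + h (vderiv (vderiv v) x) (m (z x) c))"
    by (rule cubic_perturbation_bilinear[where T="\<lambda>a b. h a (m b c)"])
       (use v z in \<open>auto intro!: smooth_continuous_on\<close>)
  ultimately show ?thesis
    unfolding quadratic_density_def quadratic_variation_def
    by (intro cubic_perturbation_add cubic_perturbation_mult)
qed

lemma quadratic_variation_eq:
  assumes "smooth v" "smooth z"
  shows "quadratic_variation c v z x
    = pair (Lam g f h (\<lambda>x. m (v x) c) x) (z x) + vderiv (quadratic_flux c v z) x"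
  using assms quadratic_variation_identity[of "z x" "v x" c "vderiv z x" "vderiv v x"
      "vderiv (vderiv z) x" "vderiv (vderiv v) x"]
  by (simp add: quadratic_variation_def quadratic_flux_def Lam_eq)

lemma integral_quadratic_variation:
  assumes v: "v \<in> loops" and z: "z \<in> loops"
  shows "integral {0..1} (quadratic_variation c v z)
    = integral {0..1} (\<lambda>x. pair (Lam g f h (\<lambda>x. m (v x) c) x) (z x))"
proof (rule integral_add_vderiv_unit_periodic)
  have smooth: "smooth v" "smooth z"
    using v z by (simp_all add: loops_smooth)
  then show "continuous_on {0..1} (\<lambda>x. pair (Lam g f h (\<lambda>x. m (v x) c) x) (z x))"
    by (intro smooth_continuous_on) (simp add: Lam_eq)
  show "unit_periodic (quadratic_flux c v z)"
    using v z by (simp add: unit_periodic_def quadratic_flux_def loops_periodic loops_vderiv)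
  show "smooth (quadratic_flux c v z)"
    using smooth by (simp add: quadratic_flux_def)
qed (use v z in \<open>simp add: quadratic_variation_eq loops_smooth\<close>)

definition cubic_density :: "'a vecC \<Rightarrow> 'a vecC \<Rightarrow> 'a vecC \<Rightarrow> 'a vecC \<Rightarrow> complex" where
  "cubic_density c v vx vxx = 1/3 * g v (m v (m v c)) + 1/3 * f vx (m v (m v c))
     + 1/3 * h (m v c) (m v vxx) + 1/6 * g (m v c) (m v v) + 1/6 * h (m vx c) (m vx v)"

definition cubic_variation :: "'a vecC \<Rightarrow> (real \<Rightarrow> 'a vecC) \<Rightarrow> (real \<Rightarrow> 'a vecC) \<Rightarrow> real \<Rightarrow> complex" where
  "cubic_variation c v z = (\<lambda>x.
       1/3 * (g (z x) (m (v x) (m (v x) c)) + g (v x) (m (z x) (m (v x) c))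
              + g (v x) (m (v x) (m (z x) c)))
     + 1/3 * (f (vderiv z x) (m (v x) (m (v x) c)) + f (vderiv v x) (m (z x) (m (v x) c))
              + f (vderiv v x) (m (v x) (m (z x) c)))
     + 1/3 * (h (m (z x) c) (m (v x) (vderiv (vderiv v) x))
              + h (m (v x) c) (m (z x) (vderiv (vderiv v) x))
              + h (m (v x) c) (m (v x) (vderiv (vderiv z) x)))
     + 1/6 * (g (m (z x) c) (m (v x) (v x)) + g (m (v x) c) (m (z x) (v x))
              + g (m (v x) c) (m (v x) (z x)))
     + 1/6 * (h (m (vderiv z x) c) (m (vderiv v x) (v x)) + h (m (vderiv v x) c) (m (vderiv z x) (v x))
              + h (m (vderiv v x) c) (m (vderiv v x) (z x))))"

definition cubic_flux :: "'a vecC \<Rightarrow> (real \<Rightarrow> 'a vecC) \<Rightarrow> (real \<Rightarrow> 'a vecC) \<Rightarrow> real \<Rightarrow> complex" where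
  "cubic_flux c v z = (\<lambda>x.
       1/3 * f (z x) (m (v x) (m (v x) c)) + 1/3 * h (vderiv z x) (m (v x) (m (v x) c))
     - 1/3 * h (z x) (m (vderiv v x) (m (v x) c) + m (v x) (m (vderiv v x) c))
     + 1/6 * h (z x) (m (m (vderiv v x) (v x)) c) + 1/6 * h (m (v x) (m (vderiv v x) c)) (z x))"

text \<open>The variational derivative of the cubic density with respect to v.\<close>

definition cubic_gradient :: "'a vecC \<Rightarrow> (real \<Rightarrow> 'a vecC) \<Rightarrow> real \<Rightarrow> 'a vecC" where
  "cubic_gradient c v = (\<lambda>x. tl g (m (v x) (m (v x) c)) + (1/2) *s Lst m (v x) (tl g (m (v x) c))
     + tl f (m (vderiv v x) (m (v x) c)) + tl h (m (vderiv (vderiv v) x) (m (v x) c))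
     + (1/2) *s tl h (m (m (vderiv v x) c) (vderiv v x)))"

lemma cubic_density_cubic_perturbation:
  assumes v: "smooth v" and z: "smooth z"
  shows "cubic_perturbation (\<lambda>e x. cubic_density c (v x + e *s z x) (vderiv v x + e *s vderiv z x)
      (vderiv (vderiv v) x + e *s vderiv (vderiv z) x)) (cubic_variation c v z)"
proof -
  have "cubic_perturbation (\<lambda>e x. g (v x + e *s z x) (m (v x + e *s z x) (m (v x + e *s z x) c)))
      (\<lambda>x. g (z x) (m (v x) (m (v x) c)) + g (v x) (m (z x) (m (v x) c)) + g (v x) (m (v x) (m (z x) c)))"
    by (rule cubic_perturbation_trilinear[where T="\<lambda>a b d. g a (m b (m d c))"])
       (use v z in \<open>auto intro!: smooth_continuous_on\<close>)
  moreover have "cubic_perturbation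
      (\<lambda>e x. f (vderiv v x + e *s vderiv z x) (m (v x + e *s z x) (m (v x + e *s z x) c)))
      (\<lambda>x. f (vderiv z x) (m (v x) (m (v x) c)) + f (vderiv v x) (m (z x) (m (v x) c))
         + f (vderiv v x) (m (v x) (m (z x) c)))"
    by (rule cubic_perturbation_trilinear[where T="\<lambda>a b d. f a (m b (m d c))"])
       (use v z in \<open>auto intro!: smooth_continuous_on\<close>)
  moreover have "cubic_perturbation
      (\<lambda>e x. h (m (v x + e *s z x) c) (m (v x + e *s z x) (vderiv (vderiv v) x + e *s vderiv (vderiv z) x)))
      (\<lambda>x. h (m (z x) c) (m (v x) (vderiv (vderiv v) x)) + h (m (v x) c) (m (z x) (vderiv (vderiv v) x))
         + h (m (v x) c) (m (v x) (vderiv (vderiv z) x)))"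
    by (rule cubic_perturbation_trilinear[where T="\<lambda>a b d. h (m a c) (m b d)"])
       (use v z in \<open>auto intro!: smooth_continuous_on\<close>)
  moreover have "cubic_perturbation (\<lambda>e x. g (m (v x + e *s z x) c) (m (v x + e *s z x) (v x + e *s z x)))
      (\<lambda>x. g (m (z x) c) (m (v x) (v x)) + g (m (v x) c) (m (z x) (v x)) + g (m (v x) c) (m (v x) (z x)))"
    by (rule cubic_perturbation_trilinear[where T="\<lambda>a b d. g (m a c) (m b d)"])
       (use v z in \<open>auto intro!: smooth_continuous_on\<close>)
  moreover have "cubic_perturbation
      (\<lambda>e x. h (m (vderiv v x + e *s vderiv z x) c) (m (vderiv v x + e *s vderiv z x) (v x + e *s z x)))
      (\<lambda>x. h (m (vderiv z x) c) (m (vderiv v x) (v x)) + h (m (vderiv v x) c) (m (vderiv z x) (v x))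
         + h (m (vderiv v x) c) (m (vderiv v x) (z x)))"
    by (rule cubic_perturbation_trilinear[where T="\<lambda>a b d. h (m a c) (m b d)"])
       (use v z in \<open>auto intro!: smooth_continuous_on\<close>)
  ultimately show ?thesis
    unfolding cubic_density_def cubic_variation_def
    by (intro cubic_perturbation_add cubic_perturbation_mult)
qed

lemma cubic_variation_eq:
  assumes v: "smooth v" and z: "smooth z"
  shows "cubic_variation c v z x = pair (cubic_gradient c v x) (z x) + vderiv (cubic_flux c v z) x"
proof -
  define p where "p = v x"
  define p1 where "p1 = vderiv v x"
  define p2 where "p2 = vderiv (vderiv v) x"
  define z0 where "z0 = z x"
  define z1 where "z1 = vderiv z x"
  define z2 where "z2 = vderiv (vderiv z) x"
  have "cubic_variation c v z x =
      1/3 * (g z0 (m p (m p c)) + g p (m z0 (m p c)) + g p (m p (m z0 c)))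
    + 1/3 * (f z1 (m p (m p c)) + f p1 (m z0 (m p c)) + f p1 (m p (m z0 c)))
    + 1/3 * (h (m z0 c) (m p p2) + h (m p c) (m z0 p2) + h (m p c) (m p z2))
    + 1/6 * (g (m z0 c) (m p p) + g (m p c) (m z0 p) + g (m p c) (m p z0))
    + 1/6 * (h (m z1 c) (m p1 p) + h (m p1 c) (m z1 p) + h (m p1 c) (m p1 z0))"
    unfolding p_def p1_def p2_def z0_def z1_def z2_def cubic_variation_def ..
  moreover have "pair (cubic_gradient c v x) (z x) = g (m p (m p c)) z0
      + 1/2 * g (m p c) (m p z0) + f (m p1 (m p c)) z0 + h (m p2 (m p c)) z0
      + 1/2 * h (m (m p1 c) p1) z0"
    unfolding p_def p1_def p2_def z0_def by (simp add: cubic_gradient_def field_simps)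
  moreover have "vderiv (cubic_flux c v z) x =
      1/3 * (f z1 (m p (m p c)) + f z0 (m p1 (m p c)) + f z0 (m p (m p1 c)))
    + 1/3 * (h z2 (m p (m p c)) + h z1 (m p1 (m p c)) + h z1 (m p (m p1 c)))
    - 1/3 * (h z1 (m p1 (m p c)) + h z1 (m p (m p1 c)) + h z0 (m p2 (m p c))
             + 2 * h z0 (m p1 (m p1 c)) + h z0 (m p (m p2 c)))
    + 1/6 * (h z1 (m (m p1 p) c) + h z0 (m (m p2 p) c) + h z0 (m (m p1 p1) c))
    + 1/6 * (h (m p1 (m p1 c)) z0 + h (m p (m p2 c)) z0 + h (m p (m p1 c)) z1)"
    unfolding p_def p1_def p2_def z0_def z1_def z2_def cubic_flux_def
    using v z by (simp add: field_simps)
  ultimately show ?thesis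
    using cubic_variation_identity[of z0 p c z1 p1 p2 z2] by (simp only:)
qed

definition cubic_flow :: "'a vecC \<Rightarrow> (real \<Rightarrow> 'a vecC) \<Rightarrow> real \<Rightarrow> 'a vecC" where
  "cubic_flow c v = (\<lambda>x. tl g (m (vderiv v x) (m (v x) c)) + tl g (m (v x) (m (vderiv v x) c))
     + Lst m (m (v x) c) (tl g (vderiv v x))
     + tl f (m (vderiv v x) (m (vderiv v x) c)) + tl f (m (vderiv (vderiv v) x) (m (v x) c))
     + 2 *s tl h (m (m (vderiv v x) c) (vderiv (vderiv v) x))
     + tl h (m (m (v x) c) (vderiv (vderiv (vderiv v)) x)))"

lemma vderiv_cubic_gradient:
  assumes v: "smooth v"
  shows "vderiv (cubic_gradient c v) = cubic_flow c v"
proof (rule ext, rule vec_eq_pairI)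
  fix x z
  let ?p = "v x" and ?p1 = "vderiv v x" and ?p2 = "vderiv (vderiv v) x"
    and ?p3 = "vderiv (vderiv (vderiv v)) x"
  have "g (m ?p c) (m ?p1 z) = g ?p1 (m (m ?p c) z)"
    using g.commute[of "m ?p c" "m ?p1 z"] g.invariant[of ?p1 z "m ?p c"] by simp
  moreover have "g (m ?p1 c) (m ?p z) = g ?p1 (m (m ?p c) z)"
    using g.invariant[of ?p1 c "m ?p z"] right_commute[of ?p z c] by simp
  moreover have "h (m ?p3 (m ?p c)) z = h (m (m ?p c) ?p3) z"
    using h.total[of ?p3 "m ?p c" z] by blast
  moreover have "h (m ?p2 (m ?p1 c)) z = h (m (m ?p1 c) ?p2) z"
    using h.total[of ?p2 "m ?p1 c" z] by blast
  moreover have "h (m (m ?p2 c) ?p1) z = h (m (m ?p1 c) ?p2) z"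
    using h.commute[of "m (m ?p2 ?p1) c" z] h.commute[of "m (m ?p1 ?p2) c" z]
      h.mult_right_commute[of z ?p2 ?p1 c] right_commute[of ?p2 c ?p1] right_commute[of ?p1 c ?p2]
    by simp
  ultimately show "pair (vderiv (cubic_gradient c v) x) z = pair (cubic_flow c v x) z"
    using v by (simp add: cubic_gradient_def cubic_flow_def field_simps)
qed

lemma lie_poisson_mult_right:
  assumes v: "smooth v"
  shows "lie_poisson m (Lam g f h v) (\<lambda>x. m (v x) c) = cubic_flow c v"
proof (rule ext, rule vec_eq_pairI)
  fix x z
  let ?p = "v x" and ?p1 = "vderiv v x" and ?p2 = "vderiv (vderiv v) x"
    and ?p3 = "vderiv (vderiv (vderiv v)) x"
  have "h (m ?p3 (m ?p c)) z = h (m (m ?p c) ?p3) z"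
    using h.total[of ?p3 "m ?p c" z] by blast
  moreover have "h (m ?p2 (m ?p1 c)) z = h (m (m ?p1 c) ?p2) z"
    using h.total[of ?p2 "m ?p1 c" z] by blast
  moreover have "g ?p (m (m ?p1 c) z) = g ?p1 (m (m ?p c) z)"
    by (rule g.swap_mult_right)
  moreover have "f ?p1 (m (m ?p1 c) z) = 0"
    by (rule f.mult_self_vanish)
  moreover have "h ?p2 (m (m ?p1 c) z) = h (m (m ?p1 c) ?p2) z"
    using h.commute[of ?p2 "m (m ?p1 c) z"] h.mult_exchange[of "m ?p1 c" ?p2 z] by simp
  ultimately show "pair (lie_poisson m (Lam g f h v) (\<lambda>x. m (v x) c) x) z = pair (cubic_flow c v x) z"
    using v by (simp add: lie_poisson_def Lam_eq cubic_flow_def g.Rst_tl f.Rst_tl h.Rst_tl field_simps)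
qed

lemma lie_poisson_const:
  assumes v: "smooth v"
  shows "lie_poisson m (Lam g f h v) (\<lambda>x. c) = Lam g f h (\<lambda>x. m (vderiv v x) c)"
  using v by (simp add: lie_poisson_def Lam_eq g.Rst_tl f.Rst_tl h.Rst_tl)

end


context novikov_bihamiltonian
begin

lemma has_var_deriv_H0:
  assumes u: "u \<in> loops"
  shows "has_var_deriv (functional_v g0 f0 h0 (\<lambda>v vx vxx. g0 c v)) u (\<lambda>x. c)"
proof (rule has_var_deriv_functional_vI[OF u, where V = "\<lambda>z x. g0 c (z x)"])
  show "(\<lambda>x. c) \<in> loops" by (intro loopsI) simp_all
  fix z :: "real \<Rightarrow> 'n vecC" assume z: "z \<in> loops"
  have "smooth (\<Lambda>inv u)" "smooth z"
    using u z by (simp_all add: Lam_inv_in_loops loops_smooth)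
  then show "cubic_perturbation (\<lambda>e x. g0 c (\<Lambda>inv u x + e *s z x)) (\<lambda>x. g0 c (z x))"
    unfolding cubic_perturbation_def
    by (intro exI[of _ "\<lambda>x. g0 c (\<Lambda>inv u x)"] exI[of _ "\<lambda>x. 0"]) (auto intro!: smooth_continuous_on)
  show "integral {0..1} (\<lambda>x. g0 c (z x)) = integral {0..1} (\<lambda>x. pair (\<Lambda> (\<lambda>x. c) x) (z x))"
    by (simp add: Lam_eq)
qed


lemma has_var_deriv_H1:
  assumes u: "u \<in> loops"
  shows "has_var_deriv (functional_v g0 f0 h0 (t0.quadratic_density c)) u (\<lambda>x. m (\<Lambda>inv u x) c)"
proof -
  have v: "\<Lambda>inv u \<in> loops" using u by (rule Lam_inv_in_loops)
  show ?thesis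
  proof (rule has_var_deriv_functional_vI[OF u, where V = "t0.quadratic_variation c (\<Lambda>inv u)"])
    show "(\<lambda>x. m (\<Lambda>inv u x) c) \<in> loops"
      using v by (intro loopsI) (simp_all add: loops_smooth loops_periodic)
  qed (simp_all add: t0.quadratic_density_cubic_perturbation t0.integral_quadratic_variation v loops_smooth)
qed

text \<open>The variational derivative of H2 with respect to v.\<close>

definition H2_gradient :: "'n vecC \<Rightarrow> (real \<Rightarrow> 'n vecC) \<Rightarrow> real \<Rightarrow> 'n vecC" where
  "H2_gradient c v = (\<lambda>x. t0.cubic_gradient c v x + Lam g1 f1 h1 (\<lambda>x. m (v x) c) x)"

lemma H2_gradient_in_loops: "v \<in> loops \<Longrightarrow> H2_gradient c v \<in> loops"
  by (intro loopsI)
     (simp_all add: H2_gradient_def t0.cubic_gradient_def Lam_eq loops_smooth loops_periodic loops_vderiv)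

lemma vderiv_H2_gradient:
  assumes "smooth v"
  shows "vderiv (H2_gradient c v) = (\<lambda>x. t0.cubic_flow c v x + Lam g1 f1 h1 (\<lambda>x. m (vderiv v x) c) x)"
proof -
  have "smooth (t0.cubic_gradient c v)" "smooth (Lam g1 f1 h1 (\<lambda>x. m (v x) c))"
    using assms by (simp_all add: t0.cubic_gradient_def Lam_eq)
  then show ?thesis
    using assms by (simp add: H2_gradient_def t0.vderiv_cubic_gradient t1.vderiv_Lam)
qed

lemma has_var_deriv_H2:
  assumes u: "u \<in> loops"
  shows "has_var_deriv
    (functional_v g0 f0 h0 (\<lambda>v vx vxx. t0.cubic_density c v vx vxx + t1.quadratic_density c v vx vxx))
    u (\<Lambda>inv (H2_gradient c (\<Lambda>inv u)))"
proof -
  let ?v = "\<Lambda>inv u"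
  have v: "?v \<in> loops" using u by (rule Lam_inv_in_loops)
  have grad: "H2_gradient c ?v \<in> loops" using v by (rule H2_gradient_in_loops)
  show ?thesis
  proof (rule has_var_deriv_functional_vI[OF u Lam_inv_in_loops[OF grad],
        where V = "\<lambda>z x. t0.cubic_variation c ?v z x + t1.quadratic_variation c ?v z x"])
    fix z :: "real \<Rightarrow> 'n vecC" assume z: "z \<in> loops"
    have smooth: "smooth ?v" "smooth z" using v z by (simp_all add: loops_smooth)
    then show "cubic_perturbation (\<lambda>e x. t0.cubic_density c (?v x + e *s z x) (vderiv ?v x + e *s vderiv z x)
        (vderiv (vderiv ?v) x + e *s vderiv (vderiv z) x)
      + t1.quadratic_density c (?v x + e *s z x) (vderiv ?v x + e *s vderiv z x)
        (vderiv (vderiv ?v) x + e *s vderiv (vderiv z) x))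
      (\<lambda>x. t0.cubic_variation c ?v z x + t1.quadratic_variation c ?v z x)"
      by (intro cubic_perturbation_add t0.cubic_density_cubic_perturbation
          t1.quadratic_density_cubic_perturbation)
    let ?\<Phi> = "\<lambda>x. t0.cubic_flux c ?v z x + t1.quadratic_flux c ?v z x"
    have flux: "smooth (t0.cubic_flux c ?v z)" "smooth (t1.quadratic_flux c ?v z)"
      using smooth by (simp_all add: t0.cubic_flux_def t1.quadratic_flux_def)
    show "integral {0..1} (\<lambda>x. t0.cubic_variation c ?v z x + t1.quadratic_variation c ?v z x)
      = integral {0..1} (\<lambda>x. pair (\<Lambda> (\<Lambda>inv (H2_gradient c ?v)) x) (z x))"
    proof (rule integral_add_vderiv_unit_periodic)
      show "continuous_on {0..1} (\<lambda>x. pair (\<Lambda> (\<Lambda>inv (H2_gradient c ?v)) x) (z x))"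
        using grad z by (intro smooth_continuous_on) (simp add: Lam_Lam_inv loops_smooth)
      show "unit_periodic ?\<Phi>"
        using v z by (simp add: unit_periodic_def t0.cubic_flux_def t1.quadratic_flux_def
            loops_periodic loops_vderiv)
      show "smooth ?\<Phi>"
        using flux by simp
      show "t0.cubic_variation c ?v z x + t1.quadratic_variation c ?v z x
        = pair (\<Lambda> (\<Lambda>inv (H2_gradient c ?v)) x) (z x) + vderiv ?\<Phi> x" for x
        using smooth grad flux
        by (simp add: Lam_Lam_inv H2_gradient_def t0.cubic_variation_eq t1.quadratic_variation_eq)
    qed
  qed
qed

end


section \<open>The bi-Hamiltonian chain\<close>

context novikov_bihamiltonian
begin

lemma P1_const:
  assumes v: "smooth v"
  shows "P1 m g1 f1 h1 (\<Lambda> v) (\<lambda>x. c) = \<Lambda> (\<lambda>x. m (vderiv v x) c)"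
  using v by (simp add: P1_eq_lie_poisson_add_P0 t0.lie_poisson_const P0_def D_eq_vderiv)

lemma P1_mult_right:
  assumes v: "smooth v"
  shows "P1 m g1 f1 h1 (\<Lambda> v) (\<lambda>x. m (v x) c) = vderiv (H2_gradient c v)"
  using v by (simp add: P1_eq_lie_poisson_add_P0 t0.lie_poisson_mult_right vderiv_H2_gradient
      P0_eq_Lam_vderiv)

lemma P0_mult_right: "smooth v \<Longrightarrow> P0 g0 f0 h0 (\<lambda>x. m (v x) c) = \<Lambda> (\<lambda>x. m (vderiv v x) c)"
  by (simp add: P0_eq_Lam_vderiv)

lemma P0_Lam_inv: "y \<in> loops \<Longrightarrow> P0 g0 f0 h0 (\<Lambda>inv y) = vderiv y"
  by (metis P0_eq_Lam_vderiv Lam_Lam_inv Lam_inv_in_loops loops_smooth t0.vderiv_Lam)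

end

theorem theorem3p1:
  fixes m :: "complex ^ 'n::finite \<Rightarrow> complex ^ 'n \<Rightarrow> complex ^ 'n"
    and g0 g1 f0 f1 h0 h1 :: "complex ^ 'n \<Rightarrow> complex ^ 'n \<Rightarrow> complex"
    and c :: "complex ^ 'n"
    and u :: "real \<Rightarrow> complex ^ 'n"
  assumes nov: "novikov m"
    and g_bil: "cbilin_form g0" "cbilin_form g1"
    and g_sym: "\<And>a b. g0 a b = g0 b a" "\<And>a b. g1 a b = g1 b a"
    and g_inv: "\<And>a b d. g0 (m a b) d = g0 a (m d b)" "\<And>a b d. g1 (m a b) d = g1 a (m d b)"
    and f_bil: "cbilin_form f0" "cbilin_form f1"
    and f_skew: "\<And>a b. f0 a b = - f0 b a" "\<And>a b. f1 a b = - f1 b a"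
    and f_inv: "\<And>a b d. f0 (m a b) d = f0 a (m d b)" "\<And>a b d. f1 (m a b) d = f1 a (m d b)"
    and f_cyc: "\<And>a b d. f0 (m a b) d + f0 (m b d) a + f0 (m d a) b = 0"
               "\<And>a b d. f1 (m a b) d + f1 (m b d) a + f1 (m d a) b = 0"
    and h_bil: "cbilin_form h0" "cbilin_form h1"
    and h_sym: "\<And>a b. h0 a b = h0 b a" "\<And>a b. h1 a b = h1 b a"
    and h0_tot: "\<And>a b d. h0 (m a b) d = h0 (m a d) b \<and> h0 (m a b) d = h0 (m b a) d
                    \<and> h0 (m a b) d = h0 (m b d) a \<and> h0 (m a b) d = h0 (m d a) b
                    \<and> h0 (m a b) d = h0 (m d b) a"
    and h1_tot: "\<And>a b d. h1 (m a b) d = h1 (m a d) b \<and> h1 (m a b) d = h1 (m b a) d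
                    \<and> h1 (m a b) d = h1 (m b d) a \<and> h1 (m a b) d = h1 (m d a) b
                    \<and> h1 (m a b) d = h1 (m d b) a"
    and Lam_bij: "bij_betw (Lam g0 f0 h0) loops loops"
    and u_loop: "u \<in> loops"
  shows
    "let v = Lam_inv g0 f0 h0 u;
         H0 = (\<lambda>v vx vxx. g0 c v);
         H1 = (\<lambda>v vx vxx. 1/2 * g0 v (m v c) + 1/2 * f0 vx (m v c) + 1/2 * h0 vxx (m v c));
         H2 = (\<lambda>v vx vxx. 1/3 * g0 v (m v (m v c)) + 1/3 * f0 vx (m v (m v c))
                 + 1/3 * h0 (m v c) (m v vxx) + 1/6 * g0 (m v c) (m v v)
                 + 1/6 * h0 (m vx c) (m vx v)
                 + 1/2 * g1 v (m v c) + 1/2 * f1 vx (m v c) + 1/2 * h1 vxx (m v c));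
         \<H>0 = functional_v g0 f0 h0 H0;
         \<H>1 = functional_v g0 f0 h0 H1;
         \<H>2 = functional_v g0 f0 h0 H2
     in has_var_deriv \<H>0 u (\<lambda>x. c)
      \<and> P0 g0 f0 h0 (\<lambda>x. c) = (\<lambda>x. 0)
      \<and> (\<exists>\<gamma>1 \<gamma>2. has_var_deriv \<H>1 u \<gamma>1 \<and> has_var_deriv \<H>2 u \<gamma>2
          \<and> P1 m g1 f1 h1 u (\<lambda>x. c) = P0 g0 f0 h0 \<gamma>1
          \<and> P1 m g1 f1 h1 u \<gamma>1 = P0 g0 f0 h0 \<gamma>2
          \<and> Lam_inv g0 f0 h0 (P1 m g1 f1 h1 u (\<lambda>x. c)) = (\<lambda>x. m (D v x) c)
          \<and> (let vt2 = Lam_inv g0 f0 h0 (P1 m g1 f1 h1 u \<gamma>1) in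
             (\<forall>x. tl g0 (vt2 x) + tl f0 (D vt2 x) + tl h0 (D (D vt2) x)
                = tl g0 (m (D v x) (m (v x) c)) + tl g0 (m (v x) (m (D v x) c))
                  + Lst m (m (v x) c) (tl g0 (D v x))
                  + tl f0 (m (D v x) (m (D v x) c)) + tl f0 (m (D (D v) x) (m (v x) c))
                  + 2 *s tl h0 (m (m (D v x) c) (D (D v) x))
                  + tl h0 (m (m (v x) c) (D (D (D v)) x))
                  + tl g1 (m (D v x) c) + tl f1 (m (D (D v) x) c)
                  + tl h1 (m (D (D (D v)) x) c))))"
proof -
  interpret novikov_bihamiltonian m g0 f0 h0 g1 f1 h1
    by unfold_locales (fact assms)+
  define v where "v = Lam_inv g0 f0 h0 u"
  have v: "v \<in> loops" and u_eq: "u = Lam g0 f0 h0 v"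
    unfolding v_def using u_loop by (simp_all add: Lam_inv_in_loops Lam_Lam_inv)
  have smooth: "smooth v" using v by (rule loops_smooth)
  have grad: "H2_gradient c v \<in> loops" using v by (rule H2_gradient_in_loops)
  note H1 = has_var_deriv_H1[OF u_loop, of c, folded v_def, unfolded t0.quadratic_density_def[abs_def]]
  note H2 = has_var_deriv_H2[OF u_loop, of c, folded v_def,
      unfolded t0.cubic_density_def[abs_def] t1.quadratic_density_def[abs_def] add.assoc[symmetric]]
  have P0_const: "P0 g0 f0 h0 (\<lambda>x. c) = (\<lambda>x. 0)"
    by (simp add: P0_def D_eq_vderiv)
  have flow1: "P1 m g1 f1 h1 u (\<lambda>x. c) = Lam g0 f0 h0 (\<lambda>x. m (vderiv v x) c)"
    unfolding u_eq using smooth by (rule P1_const)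
  have flow1_v: "Lam_inv g0 f0 h0 (P1 m g1 f1 h1 u (\<lambda>x. c)) = (\<lambda>x. m (D v x) c)"
    unfolding flow1 D_eq_vderiv
    by (rule Lam_inv_eqI, use v in \<open>intro loopsI\<close>) (simp_all add: loops_smooth loops_vderiv loops_periodic)
  have flow2: "P1 m g1 f1 h1 u (\<lambda>x. m (v x) c) = vderiv (H2_gradient c v)"
    unfolding u_eq using smooth by (rule P1_mult_right)
  have flow2_v: "\<forall>x. Lam g0 f0 h0 (Lam_inv g0 f0 h0 (P1 m g1 f1 h1 u (\<lambda>x. m (v x) c))) x
      = tl g0 (m (D v x) (m (v x) c)) + tl g0 (m (v x) (m (D v x) c))
        + Lst m (m (v x) c) (tl g0 (D v x))
        + tl f0 (m (D v x) (m (D v x) c)) + tl f0 (m (D (D v) x) (m (v x) c))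
        + 2 *s tl h0 (m (m (D v x) c) (D (D v) x)) + tl h0 (m (m (v x) c) (D (D (D v)) x))
        + tl g1 (m (D v x) c) + tl f1 (m (D (D v) x) c) + tl h1 (m (D (D (D v)) x) c)"
    unfolding flow2 Lam_Lam_inv[OF loops_vderiv[OF grad]] unfolding vderiv_H2_gradient[OF smooth]
    using smooth by (simp add: t0.cubic_flow_def Lam_eq D_eq_vderiv add.assoc)
  have chain1: "P1 m g1 f1 h1 u (\<lambda>x. c) = P0 g0 f0 h0 (\<lambda>x. m (v x) c)"
    using flow1 smooth by (simp add: P0_mult_right)
  have chain2: "P1 m g1 f1 h1 u (\<lambda>x. m (v x) c) = P0 g0 f0 h0 (Lam_inv g0 f0 h0 (H2_gradient c v))"
    using flow2 grad by (simp add: P0_Lam_inv)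
  show ?thesis
    unfolding Let_def v_def[symmetric]
    using has_var_deriv_H0[OF u_loop] P0_const H1 H2 chain1 chain2 flow1_v
      flow2_v[unfolded Lam_def]
    by blast
qed

end
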